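(* For every $\mathbf x\in[-\alpha,1]^n$ there is a unique $\lambda\in\mathcal P(\mathbf x)$ whose support $\{\mathbf a\in D^n:\lambda(\mathbf a)>0\}$ forms a chain in $D^n$ with respect to $\preceq$ (i.e. any two elements of the support are comparable).
   Context: Fix $\alpha\in(0,1]$ and $D=\{-\alpha,0,1\}\subset\mathbb R$. Define the partial order $\preceq$ on $D$ by $0\preceq 1$, $0\preceq -\alpha$ (plus reflexivity), with $1$ and $-\alpha$ incomparable; extend it componentwise to $D^n$. For $\mathbf x\in[-\alpha,1]^n$, let $\mathcal P(\mathbf x)$ be the set of all functions $\lambda:D^n\to[0,1]$ with $\sum_{\mathbf a\in D^n}\lambda(\mathbf a)=1$ and $\sum_{\mathbf a\in D^n}\lambda(\mathbf a)\,\mathbf a=\mathbf x$ (vectors in $D^n\subset\mathbb R^n$), i.e. probability distributions on $D^n$ with mean $\mathbf x$. *)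

theory Defs
  imports "HOL-Analysis.Analysis"
begin

definition Dset :: "real \<Rightarrow> real set" where
  "Dset \<alpha> = {-\<alpha>, 0, 1}"

definition Dn :: "real \<Rightarrow> (real^'n) set" where
  "Dn \<alpha> = {a. \<forall>i. a $ i \<in> Dset \<alpha>}"

definition Dle :: "real \<Rightarrow> real \<Rightarrow> bool" where
  "Dle s t \<longleftrightarrow> s = t \<or> s = 0"

definition Dnle :: "real^'n \<Rightarrow> real^'n \<Rightarrow> bool" where
  "Dnle a b \<longleftrightarrow> (\<forall>i. Dle (a $ i) (b $ i))"

text \<open>Probability distributions on D^n with mean x. A function on D^n is
  represented as a function on real^'n that vanishes outside D^n.\<close>
definition Pmean :: "real \<Rightarrow> real^'n \<Rightarrow> (real^'n \<Rightarrow> real) set" where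
  "Pmean \<alpha> x = {l. (\<forall>a. a \<notin> Dn \<alpha> \<longrightarrow> l a = 0)
      \<and> (\<forall>a\<in>Dn \<alpha>. 0 \<le> l a \<and> l a \<le> 1)
      \<and> (\<Sum>a\<in>Dn \<alpha>. l a) = 1
      \<and> (\<Sum>a\<in>Dn \<alpha>. l a *\<^sub>R a) = x}"

definition support :: "real \<Rightarrow> (real^'n \<Rightarrow> real) \<Rightarrow> (real^'n) set" where
  "support \<alpha> l = {a \<in> Dn \<alpha>. l a > 0}"

definition is_chain :: "(real^'n) set \<Rightarrow> bool" where
  "is_chain S \<longleftrightarrow> (\<forall>a\<in>S. \<forall>b\<in>S. Dnle a b \<or> Dnle b a)"

end

theory Submission imports Defs begin

text \<open>
  If the support of \<open>\<lambda>\<close> is a chain, then in each coordinate \<open>i\<close> all its points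
  with nonzero entry carry the sign of \<open>x\<^sub>i\<close>, the sets \<open>A\<^sub>i\<close> of such points are
  nested, and \<open>A\<^sub>i\<close> has mass \<open>p\<^sub>i = x\<^sub>i / sign\<^sub>i \<in> [0,1]\<close>. Hence the mass of a point
  \<open>b\<close> of the support is \<open>min {p\<^sub>i | b\<^sub>i \<noteq> 0} - max {p\<^sub>j | b\<^sub>j = 0}\<close>, a closed formula
  in \<open>x\<close> alone, which gives uniqueness. For existence take \<open>t\<close> uniform on \<open>[0,1]\<close>
  and the point \<open>v(t)\<close> with \<open>v(t)\<^sub>i = sign\<^sub>i\<close> if \<open>t \<le> p\<^sub>i\<close> and \<open>0\<close> otherwise:
  \<open>v\<close> is antitone, so the law of \<open>v(t)\<close> is supported on a chain, and
  \<open>E v(t)\<^sub>i = sign\<^sub>i p\<^sub>i = x\<^sub>i\<close>.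
\<close>

definition coord_sign :: "real \<Rightarrow> real^'n \<Rightarrow> 'n \<Rightarrow> real" where
  "coord_sign \<alpha> x i = (if 0 \<le> x$i then 1 else -\<alpha>)"

definition coord_level :: "real \<Rightarrow> real^'n \<Rightarrow> 'n \<Rightarrow> real" where
  "coord_level \<alpha> x i = x$i / coord_sign \<alpha> x i"

definition min_level :: "real \<Rightarrow> real^'n \<Rightarrow> 'n set \<Rightarrow> real" where
  "min_level \<alpha> x I = (if I = {} then 1 else Min (coord_level \<alpha> x ` I))"

definition max_level :: "real \<Rightarrow> real^'n \<Rightarrow> 'n set \<Rightarrow> real" where
  "max_level \<alpha> x J = (if J = {} then 0 else Max (coord_level \<alpha> x ` J))"

text \<open>The weight of \<open>b\<close> under the chain distribution; the \<open>max 0\<close> takes care of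
  sign-compatible points outside the support.\<close>

definition chain_weight :: "real \<Rightarrow> real^'n \<Rightarrow> real^'n \<Rightarrow> real" where
  "chain_weight \<alpha> x b =
     (if \<forall>i. b$i \<in> {0, coord_sign \<alpha> x i}
      then max 0 (min_level \<alpha> x {i. b$i \<noteq> 0} - max_level \<alpha> x {j. b$j = 0})
      else 0)"

definition threshold_point :: "real \<Rightarrow> real^'n \<Rightarrow> real \<Rightarrow> real^'n" where
  "threshold_point \<alpha> x t = (\<chi> i. if t \<le> coord_level \<alpha> x i then coord_sign \<alpha> x i else 0)"

lemma finite_Dn: "finite (Dn \<alpha> :: (real^'n) set)"
proof -
  have "Dn \<alpha> \<subseteq> vec_lambda ` (PiE (UNIV::'n set) (\<lambda>_. Dset \<alpha>))"
  proof
    fix a :: "real^'n" assume "a \<in> Dn \<alpha>"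
    then have "(\<lambda>i. a$i) \<in> PiE UNIV (\<lambda>_. Dset \<alpha>)" by (auto simp: Dn_def)
    then show "a \<in> vec_lambda ` PiE UNIV (\<lambda>_. Dset \<alpha>)" by (metis image_eqI vec_lambda_eta)
  qed
  moreover have "finite (PiE (UNIV::'n set) (\<lambda>_. Dset \<alpha>))"
    by (intro finite_PiE) (auto simp: Dset_def)
  ultimately show ?thesis by (meson finite_imageI finite_subset)
qed

lemma coord_sign_neq_0: "0 < \<alpha> \<Longrightarrow> coord_sign \<alpha> x i \<noteq> 0"
  by (simp add: coord_sign_def)

lemma coord_sign_mult_level: "0 < \<alpha> \<Longrightarrow> coord_sign \<alpha> x i * coord_level \<alpha> x i = x$i"
  by (simp add: coord_level_def coord_sign_neq_0)

lemma coord_level_bounds: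
  assumes "0 < \<alpha>" and "-\<alpha> \<le> x$i" and "x$i \<le> 1"
  shows "0 \<le> coord_level \<alpha> x i" and "coord_level \<alpha> x i \<le> 1"
  using assms by (auto simp: coord_level_def coord_sign_def divide_nonpos_neg divide_le_eq)

subsection \<open>Uniqueness\<close>

locale chain_distribution =
  fixes \<alpha> :: real and x :: "real^'n" and l :: "real^'n \<Rightarrow> real"
  assumes alpha_pos: "0 < \<alpha>"
    and l_Pmean: "l \<in> Pmean \<alpha> x"
    and support_chain: "is_chain (support \<alpha> l)"
begin

definition active :: "'n \<Rightarrow> (real^'n) set" where
  "active i = {c \<in> support \<alpha> l. c$i \<noteq> 0}"

lemma nonneg: "0 \<le> l a"
  using l_Pmean by (cases "a \<in> Dn \<alpha>") (auto simp: Pmean_def)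

lemma zero_off_support: "a \<notin> support \<alpha> l \<Longrightarrow> l a = 0"
  using l_Pmean nonneg[of a] by (auto simp: Pmean_def support_def)

lemma finite_support: "finite (support \<alpha> l)"
  using finite_Dn by (rule finite_subset[rotated]) (auto simp: support_def)

lemma pos_on_support: "c \<in> support \<alpha> l \<Longrightarrow> 0 < l c"
  by (simp add: support_def)

lemma sum_Dn_eq_sum_support: "(\<Sum>a\<in>Dn \<alpha>. l a * f a) = (\<Sum>a\<in>support \<alpha> l. l a * f a)"
proof (rule sum.mono_neutral_right[OF finite_Dn])
  show "support \<alpha> l \<subseteq> Dn \<alpha>" by (auto simp: support_def)
  show "\<forall>a\<in>Dn \<alpha> - support \<alpha> l. l a * f a = 0" using zero_off_support by simp
qed

lemma sum_support: "sum l (support \<alpha> l) = 1"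
  using l_Pmean sum_Dn_eq_sum_support[of "\<lambda>_. 1"] by (simp add: Pmean_def)

lemma mean_coord: "(\<Sum>c\<in>support \<alpha> l. l c * c$i) = x$i"
proof -
  have "x$i = (\<Sum>a\<in>Dn \<alpha>. l a * a$i)"
    using l_Pmean by (auto simp: Pmean_def)
  then show ?thesis using sum_Dn_eq_sum_support[of "\<lambda>a. a$i"] by simp
qed

lemma sum_mono_support: "X \<subseteq> Y \<Longrightarrow> Y \<subseteq> support \<alpha> l \<Longrightarrow> sum l X \<le> sum l Y"
  by (rule sum_mono2) (auto intro: finite_subset[OF _ finite_support] nonneg)

lemma chain_nonzero_coords_eq:
  "c \<in> support \<alpha> l \<Longrightarrow> d \<in> support \<alpha> l \<Longrightarrow> c$i \<noteq> 0 \<Longrightarrow> d$i \<noteq> 0 \<Longrightarrow> d$i = c$i"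
  using support_chain unfolding is_chain_def Dnle_def Dle_def by metis

lemma support_coord_sign:
  assumes c: "c \<in> support \<alpha> l" and nz: "c$i \<noteq> 0"
  shows "c$i = coord_sign \<alpha> x i"
proof -
  have "x$i = (\<Sum>d\<in>support \<alpha> l. c$i * (if d$i \<noteq> 0 then l d else 0))"
    unfolding mean_coord[symmetric]
    by (rule sum.cong) (auto dest: chain_nonzero_coords_eq[OF c _ nz])
  also have "\<dots> = c$i * sum l (active i)"
    by (simp add: sum_distrib_left[symmetric] sum.inter_filter[OF finite_support] active_def)
  finally have x_eq: "x$i = c$i * sum l (active i)" .
  have "l c \<le> sum l (active i)"
    using c nz by (intro member_le_sum) (auto simp: active_def nonneg finite_support)
  with pos_on_support[OF c] have "0 < sum l (active i)" by simp
  moreover have "c$i = -\<alpha> \<or> c$i = 1"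
    using c nz by (auto simp: support_def Dn_def Dset_def)
  ultimately show ?thesis
    using x_eq mult_pos_pos[OF alpha_pos \<open>0 < sum l (active i)\<close>] by (auto simp: coord_sign_def)
qed

lemma sum_active: "sum l (active i) = coord_level \<alpha> x i"
proof -
  have "x$i = (\<Sum>d\<in>support \<alpha> l. coord_sign \<alpha> x i * (if d$i \<noteq> 0 then l d else 0))"
    unfolding mean_coord[symmetric]
    by (intro sum.cong refl) (use support_coord_sign in force)
  also have "\<dots> = coord_sign \<alpha> x i * sum l (active i)"
    by (simp add: sum_distrib_left[symmetric] sum.inter_filter[OF finite_support] active_def)
  finally show ?thesis
    using coord_sign_neq_0[OF alpha_pos, of x i] by (simp add: coord_level_def)
qed

lemma active_nested: "active i \<subseteq> active j \<or> active j \<subseteq> active i"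
proof (rule ccontr)
  assume "\<not> ?thesis"
  then obtain c d where "c \<in> support \<alpha> l" "c$i \<noteq> 0" "c$j = 0"
    and "d \<in> support \<alpha> l" "d$j \<noteq> 0" "d$i = 0"
    by (auto simp: active_def)
  then show False
    using support_chain unfolding is_chain_def Dnle_def Dle_def by metis
qed

lemma active_mono:
  assumes "coord_level \<alpha> x i \<le> coord_level \<alpha> x j"
  shows "active i \<subseteq> active j"
proof (rule ccontr)
  assume "\<not> ?thesis"
  with active_nested obtain c where "active j \<subseteq> active i" "c \<in> active i - active j"
    by blast
  then have "sum l (active j) < sum l (active i)"
    by (intro sum_strict_mono2) (auto simp: active_def finite_support pos_on_support nonneg)
  with assms show False by (simp add: sum_active)
qed

lemma sum_inter_active: "sum l (support \<alpha> l \<inter> (\<Inter>i\<in>I. active i)) = min_level \<alpha> x I"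
proof (cases "I = {}")
  case True
  then show ?thesis by (simp add: min_level_def sum_support)
next
  case False
  then have "Min (coord_level \<alpha> x ` I) \<in> coord_level \<alpha> x ` I" by (intro Min_in) auto
  then obtain i0 where "i0 \<in> I" and i0_min: "coord_level \<alpha> x i0 = Min (coord_level \<alpha> x ` I)"
    by auto
  have "active i0 \<subseteq> active i" if "i \<in> I" for i
    using that i0_min by (intro active_mono) simp
  moreover have "active i0 \<subseteq> support \<alpha> l" by (auto simp: active_def)
  ultimately have "support \<alpha> l \<inter> (\<Inter>i\<in>I. active i) = active i0"
    using \<open>i0 \<in> I\<close> by blast
  then show ?thesis using False i0_min by (simp add: min_level_def sum_active)
qed

lemma sum_union_active: "sum l (\<Union>j\<in>J. active j) = max_level \<alpha> x J"
proof (cases "J = {}")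
  case True
  then show ?thesis by (simp add: max_level_def)
next
  case False
  then have "Max (coord_level \<alpha> x ` J) \<in> coord_level \<alpha> x ` J" by (intro Max_in) auto
  then obtain j0 where "j0 \<in> J" and j0_max: "coord_level \<alpha> x j0 = Max (coord_level \<alpha> x ` J)"
    by auto
  have "active j \<subseteq> active j0" if "j \<in> J" for j
    using that j0_max by (intro active_mono) simp
  then have "(\<Union>j\<in>J. active j) = active j0"
    using \<open>j0 \<in> J\<close> by blast
  then show ?thesis using False j0_max by (simp add: max_level_def sum_active)
qed

lemma eq_chain_weight: "l b = chain_weight \<alpha> x b"
proof (cases "\<forall>i. b$i \<in> {0, coord_sign \<alpha> x i}")
  case False
  then obtain i where "b$i \<noteq> 0" "b$i \<noteq> coord_sign \<alpha> x i" by blast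
  then have "b \<notin> support \<alpha> l" using support_coord_sign by blast
  then show ?thesis
    unfolding chain_weight_def by (subst if_not_P[OF False]) (rule zero_off_support)
next
  case compatible: True
  define T where "T = support \<alpha> l \<inter> (\<Inter>i\<in>{i. b$i \<noteq> 0}. active i)"
  define B where "B = (\<Union>j\<in>{j. b$j = 0}. active j)"
  have sums: "sum l T - sum l B = min_level \<alpha> x {i. b$i \<noteq> 0} - max_level \<alpha> x {j. b$j = 0}"
    unfolding T_def B_def by (simp add: sum_inter_active sum_union_active)
  have B_sub: "B \<subseteq> support \<alpha> l" by (auto simp: B_def active_def)
  have T_minus_B: "T - B \<subseteq> {b}"
  proof
    fix c assume "c \<in> T - B"
    then have c: "c \<in> support \<alpha> l" and nonzero: "\<And>i. b$i \<noteq> 0 \<Longrightarrow> c$i \<noteq> 0"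
      and zero: "\<And>j. b$j = 0 \<Longrightarrow> c$j = 0"
      by (auto simp: T_def B_def active_def)
    have "c$i = b$i" for i
    proof (cases "b$i = 0")
      case True
      then show ?thesis using zero by simp
    next
      case False
      then show ?thesis
        using compatible support_coord_sign[OF c nonzero[OF False]] by auto
    qed
    then show "c \<in> {b}" by (simp add: vec_eq_iff)
  qed
  show ?thesis
  proof (cases "b \<in> support \<alpha> l")
    case True
    have "B \<subseteq> T"
    proof
      fix c assume "c \<in> B"
      then obtain j where c: "c \<in> support \<alpha> l" "b$j = 0" "c$j \<noteq> 0"
        by (auto simp: B_def active_def)
      have "Dnle b c \<or> Dnle c b"
        using True c(1) support_chain unfolding is_chain_def by blast
      moreover have "\<not> Dnle c b" using c unfolding Dnle_def Dle_def by metis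
      ultimately have "Dnle b c" by blast
      then have "c$i \<noteq> 0" if "b$i \<noteq> 0" for i
        using that unfolding Dnle_def Dle_def by metis
      with c(1) show "c \<in> T" by (simp add: T_def active_def)
    qed
    moreover have "b \<in> T" "b \<notin> B"
      using True by (auto simp: T_def B_def active_def)
    ultimately have "T = insert b B" using T_minus_B by blast
    moreover have "finite B" using B_sub finite_support by (rule finite_subset)
    ultimately have "sum l T - sum l B = l b" using \<open>b \<notin> B\<close> by simp
    with sums compatible pos_on_support[OF True] show ?thesis
      by (simp add: chain_weight_def)
  next
    case False
    then have "b \<notin> T" by (simp add: T_def)
    with T_minus_B have "T \<subseteq> B" by blast
    then have "sum l T \<le> sum l B"
      using B_sub by (rule sum_mono_support)
    with sums compatible False show ?thesis
      by (simp add: chain_weight_def zero_off_support)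
  qed
qed

end

subsection \<open>Existence\<close>

lemma integral_step_01:
  fixes p s :: real
  assumes "0 \<le> p" "p \<le> 1"
  shows "integral {0..1} (\<lambda>t. if t \<le> p then s else 0) = s * p"
proof -
  have "(\<lambda>t. if t \<le> p then s else 0) = (\<lambda>t. s * indicat_real {..p} t)"
    by (auto simp: indicator_def)
  moreover have "{..p} \<inter> {0..1} = {0..p}" using assms by auto
  moreover have "integral {0..1} (indicat_real {..p}) = measure lebesgue ({..p} \<inter> {0..1})"
    by (rule integral_indicator) (simp add: \<open>{..p} \<inter> {0..1} = {0..p}\<close>)
  ultimately show ?thesis using assms by simp
qed

lemma integrable_indicator_convex:
  "convex S \<Longrightarrow> indicat_real S integrable_on {a..b::real}"
  unfolding integrable_on_indicator
  by (rule measurable_convex) (auto intro: convex_Int bounded_Int)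

lemma sum_fibre_integrals:
  fixes v :: "real \<Rightarrow> 'a" and f :: "'a \<Rightarrow> real"
  assumes "finite S" and "\<And>t. v t \<in> S" and "\<And>a. convex {t. v t = a}"
  shows "(\<Sum>a\<in>S. integral {0..1} (indicat_real {t. v t = a}) * f a) = integral {0..1} (\<lambda>t. f (v t))"
proof -
  have "(\<lambda>t. indicat_real {t. v t = a} t * f a) integrable_on {0..1}" for a
    using integrable_on_cmult_right[OF integrable_indicator_convex[OF assms(3)]] by simp
  then have "(\<Sum>a\<in>S. integral {0..1} (indicat_real {t. v t = a}) * f a)
      = integral {0..1} (\<lambda>t. \<Sum>a\<in>S. indicat_real {t. v t = a} t * f a)"
    by (subst integral_sum) (auto simp: assms(1))
  also have "\<dots> = integral {0..1} (\<lambda>t. f (v t))"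
    using assms(1,2) by (simp add: indicator_def if_distrib cong: if_cong)
  finally show ?thesis .
qed

lemma threshold_point_in_Dn: "threshold_point \<alpha> x t \<in> Dn \<alpha>"
  by (auto simp: threshold_point_def Dn_def Dset_def coord_sign_def)

lemma threshold_point_antimono: "t \<le> s \<Longrightarrow> Dnle (threshold_point \<alpha> x s) (threshold_point \<alpha> x t)"
  by (auto simp: Dnle_def Dle_def threshold_point_def)

lemma convex_threshold_point_fibre: "convex {t. threshold_point \<alpha> x t = a}"
  unfolding is_interval_convex_1[symmetric] is_interval_1
proof (intro ballI allI impI)
  fix t s r assume "t \<in> {t. threshold_point \<alpha> x t = a}" "s \<in> {t. threshold_point \<alpha> x t = a}"
    and "t \<le> r \<and> r \<le> s"
  then have "threshold_point \<alpha> x r $ i = a $ i" for i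
    by (cases "r \<le> coord_level \<alpha> x i")
      (auto simp: threshold_point_def vec_eq_iff dest!: spec[of _ i])
  then show "r \<in> {t. threshold_point \<alpha> x t = a}" by (simp add: vec_eq_iff)
qed

definition threshold_distribution :: "real \<Rightarrow> real^'n \<Rightarrow> real^'n \<Rightarrow> real" where
  "threshold_distribution \<alpha> x a =
     (if a \<in> Dn \<alpha> then integral {0..1} (indicat_real {t. threshold_point \<alpha> x t = a}) else 0)"

lemma threshold_distribution_nonneg: "0 \<le> threshold_distribution \<alpha> x a"
  unfolding threshold_distribution_def
  by (auto intro!: integral_nonneg integrable_indicator_convex convex_threshold_point_fibre)

lemma sum_threshold_distribution:
  "(\<Sum>a\<in>Dn \<alpha>. threshold_distribution \<alpha> x a * f a) = integral {0..1} (\<lambda>t. f (threshold_point \<alpha> x t))"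
  unfolding threshold_distribution_def
  using sum_fibre_integrals[OF finite_Dn threshold_point_in_Dn convex_threshold_point_fibre]
  by simp

lemma threshold_distribution_Pmean:
  assumes alpha_pos: "0 < \<alpha>" and x_bounds: "\<forall>i. -\<alpha> \<le> x $ i \<and> x $ i \<le> 1"
  shows "threshold_distribution \<alpha> x \<in> Pmean \<alpha> x"
proof -
  let ?l = "threshold_distribution \<alpha> x"
  have sum_one: "(\<Sum>a\<in>Dn \<alpha>. ?l a) = 1"
    using sum_threshold_distribution[of \<alpha> x "\<lambda>_. 1"] by simp
  have "(\<Sum>a\<in>Dn \<alpha>. ?l a *\<^sub>R a) $ i = x $ i" for i
  proof -
    have "(\<Sum>a\<in>Dn \<alpha>. ?l a *\<^sub>R a) $ i = integral {0..1} (\<lambda>t. threshold_point \<alpha> x t $ i)"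
      using sum_threshold_distribution[of \<alpha> x "\<lambda>a. a $ i"] by simp
    also have "\<dots> = integral {0..1} (\<lambda>t. if t \<le> coord_level \<alpha> x i then coord_sign \<alpha> x i else 0)"
      by (simp add: threshold_point_def)
    also have "\<dots> = x $ i"
      using coord_level_bounds[OF alpha_pos, of x i] x_bounds
      by (simp add: integral_step_01 coord_sign_mult_level[OF alpha_pos])
    finally show ?thesis .
  qed
  then have mean: "(\<Sum>a\<in>Dn \<alpha>. ?l a *\<^sub>R a) = x" by (simp add: vec_eq_iff)
  have "?l a \<le> 1" if "a \<in> Dn \<alpha>" for a
    using member_le_sum[of a "Dn \<alpha>" ?l] that threshold_distribution_nonneg finite_Dn sum_one
    by auto
  moreover have "?l a = 0" if "a \<notin> Dn \<alpha>" for a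
    using that by (simp add: threshold_distribution_def)
  ultimately show ?thesis
    unfolding Pmean_def using threshold_distribution_nonneg sum_one mean by blast
qed

lemma support_threshold_distribution:
  "support \<alpha> (threshold_distribution \<alpha> x) \<subseteq> range (threshold_point \<alpha> x)"
proof
  fix a assume a: "a \<in> support \<alpha> (threshold_distribution \<alpha> x)"
  show "a \<in> range (threshold_point \<alpha> x)"
  proof (rule ccontr)
    assume "a \<notin> range (threshold_point \<alpha> x)"
    then have "indicat_real {t. threshold_point \<alpha> x t = a} = (\<lambda>_. 0)"
      by (auto simp: indicator_def fun_eq_iff)
    then have "threshold_distribution \<alpha> x a = 0" by (simp add: threshold_distribution_def)
    with a show False by (simp add: support_def)
  qed
qed

lemma chain_support_threshold_distribution:
  "is_chain (support \<alpha> (threshold_distribution \<alpha> x))"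
  unfolding is_chain_def
proof (intro ballI)
  fix a b assume "a \<in> support \<alpha> (threshold_distribution \<alpha> x)"
    and "b \<in> support \<alpha> (threshold_distribution \<alpha> x)"
  then obtain t s where "a = threshold_point \<alpha> x t" "b = threshold_point \<alpha> x s"
    using support_threshold_distribution by blast
  then show "Dnle a b \<or> Dnle b a"
    using threshold_point_antimono by (cases "t \<le> s") auto
qed

theorem lemma1:
  fixes \<alpha> :: real and x :: "real^'n"
  assumes "0 < \<alpha>" and "\<alpha> \<le> 1"
    and "\<forall>i. -\<alpha> \<le> x $ i \<and> x $ i \<le> 1"
  shows "\<exists>!l. l \<in> Pmean \<alpha> x \<and> is_chain (support \<alpha> l)"
proof (rule ex_ex1I)
  show "\<exists>l. l \<in> Pmean \<alpha> x \<and> is_chain (support \<alpha> l)"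
    using threshold_distribution_Pmean[OF assms(1,3)] chain_support_threshold_distribution
    by blast
next
  fix l l' assume "l \<in> Pmean \<alpha> x \<and> is_chain (support \<alpha> l)"
    and "l' \<in> Pmean \<alpha> x \<and> is_chain (support \<alpha> l')"
  then interpret l: chain_distribution \<alpha> x l + l': chain_distribution \<alpha> x l'
    using assms(1) by (auto intro: chain_distribution.intro)
  show "l = l'" by (simp add: fun_eq_iff l.eq_chain_weight l'.eq_chain_weight)
qed

end
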